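(* Let $U\subset\mathbb R^2$ be open and $f\in C^2(U)$ a solution of \[ 2(x-2f_y)(y+2f_x)(f_{yy}-f_{xx})+(1-2f_{xy})(y+2f_x)^2+(x-2f_y)^2(1+2f_{xy})=0 \quad (\ast) \] on $U$. If $x-2f_y\ne0$ on $U$, then $g=\dfrac{y+2f_x}{x-2f_y}$ satisfies the backward inviscid Burgers equation $g_y=g\,g_x$ on $U$. If $y+2f_x\neq0$ on $U$, then $h=\dfrac{x-2f_y}{y+2f_x}$ satisfies $h_x=h\,h_y$ on $U$.
   Context: Equation $(\ast)$ is the equation characterizing graphs $z=f(x,y)$ in the Heisenberg group with vanishing curvature of transversality. *)

theory Defs
  imports "HOL-Analysis.Analysis"
begin

definition px :: "(real \<times> real \<Rightarrow> real) \<Rightarrow> real \<times> real \<Rightarrow> real" where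
  "px F p = deriv (\<lambda>t. F (t, snd p)) (fst p)"

definition py :: "(real \<times> real \<Rightarrow> real) \<Rightarrow> real \<times> real \<Rightarrow> real" where
  "py F p = deriv (\<lambda>t. F (fst p, t)) (snd p)"

definition has_partials_on :: "(real \<times> real) set \<Rightarrow> (real \<times> real \<Rightarrow> real) \<Rightarrow> bool" where
  "has_partials_on U F \<longleftrightarrow>
     (\<forall>p\<in>U. (\<lambda>t. F (t, snd p)) differentiable (at (fst p))
           \<and> (\<lambda>t. F (fst p, t)) differentiable (at (snd p)))"

definition C1_on :: "(real \<times> real) set \<Rightarrow> (real \<times> real \<Rightarrow> real) \<Rightarrow> bool" where
  "C1_on U F \<longleftrightarrow> has_partials_on U F
     \<and> continuous_on U (px F) \<and> continuous_on U (py F)"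

definition C2_on :: "(real \<times> real) set \<Rightarrow> (real \<times> real \<Rightarrow> real) \<Rightarrow> bool" where
  "C2_on U F \<longleftrightarrow> continuous_on U F \<and> C1_on U F \<and> C1_on U (px F) \<and> C1_on U (py F)"

end

theory Submission
  imports Defs
begin

text \<open>
  Write u = y + 2 f_x and v = x - 2 f_y.  Their partial derivatives are
  u_x = 2 f_xx, u_y = 1 + 2 f_xy, v_x = 1 - 2 f_yx, v_y = -2 f_yy, so once the
  mixed partials of f agree, equation (*) says exactly
      v (v u_y - u v_y) = u (v u_x - u v_x).                        (R)
  By the quotient rule, (R) is equivalent (where v is nonzero) to g_y = g g_x
  for g = u/v, and (where u is nonzero) to h_x = h h_y for h = v/u.
\<close>

lemma px_has_derivative:
  assumes "has_partials_on U F" "p \<in> U"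
  shows "((\<lambda>t. F (t, snd p)) has_real_derivative px F p) (at (fst p))"
  using assms unfolding has_partials_on_def px_def
  by (simp add: DERIV_deriv_iff_real_differentiable)

lemma py_has_derivative:
  assumes "has_partials_on U F" "p \<in> U"
  shows "((\<lambda>t. F (fst p, t)) has_real_derivative py F p) (at (snd p))"
  using assms unfolding has_partials_on_def py_def
  by (simp add: DERIV_deriv_iff_real_differentiable)

lemma dist_square_le:
  assumes "\<bar>s - x\<bar> \<le> h" "\<bar>t - y\<bar> \<le> h"
  shows "dist (s, t) (x :: real, y :: real) \<le> 2 * h"
proof -
  have "dist (s, t) (x, y) = norm (s - x, t - y)" by (simp add: dist_norm)
  also have "\<dots> \<le> \<bar>s - x\<bar> + \<bar>t - y\<bar>" using norm_Pair_le[of "s - x" "t - y"] by simp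
  finally show ?thesis using assms by linarith
qed

definition square_diff :: "(real \<times> real \<Rightarrow> real) \<Rightarrow> real \<Rightarrow> real \<Rightarrow> real \<Rightarrow> real" where
  "square_diff F x y h = F (x + h, y + h) - F (x + h, y) - F (x, y + h) + F (x, y)"

text \<open>Mean value theorem first in x, then in y: the second difference equals
  h^2 f_xy at some interior point of the square.\<close>
lemma square_diff_py_px:
  assumes h: "0 < h" and sq: "\<And>s t. x \<le> s \<Longrightarrow> s \<le> x + h \<Longrightarrow> y \<le> t \<Longrightarrow> t \<le> y + h \<Longrightarrow> (s, t) \<in> U"
    and F: "has_partials_on U F" and Fx: "has_partials_on U (px F)"
  shows "\<exists>\<xi> \<eta>. x < \<xi> \<and> \<xi> < x + h \<and> y < \<eta> \<and> \<eta> < y + h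
           \<and> square_diff F x y h = h\<^sup>2 * py (px F) (\<xi>, \<eta>)"
proof -
  have "\<exists>\<xi>. x < \<xi> \<and> \<xi> < x + h \<and>
      (\<lambda>s. F (s, y + h) - F (s, y)) (x + h) - (\<lambda>s. F (s, y + h) - F (s, y)) x
      = (x + h - x) * (px F (\<xi>, y + h) - px F (\<xi>, y))"
  proof (rule MVT2)
    fix s assume "x \<le> s" "s \<le> x + h"
    with h have "(s, y + h) \<in> U" "(s, y) \<in> U" by (auto intro: sq)
    from px_has_derivative[OF F this(1)] px_has_derivative[OF F this(2)]
    show "((\<lambda>s. F (s, y + h) - F (s, y)) has_real_derivative px F (s, y + h) - px F (s, y)) (at s)"
      by (auto intro!: derivative_eq_intros)
  qed (use h in simp)
  then obtain \<xi> where \<xi>: "x < \<xi>" "\<xi> < x + h"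
    and diff: "square_diff F x y h = h * (px F (\<xi>, y + h) - px F (\<xi>, y))"
    unfolding square_diff_def by auto
  have "\<exists>\<eta>. y < \<eta> \<and> \<eta> < y + h \<and>
      px F (\<xi>, y + h) - px F (\<xi>, y) = (y + h - y) * py (px F) (\<xi>, \<eta>)"
  proof (rule MVT2[where f = "\<lambda>t. px F (\<xi>, t)"])
    fix t assume "y \<le> t" "t \<le> y + h"
    with \<xi> have "(\<xi>, t) \<in> U" by (auto intro: sq)
    from py_has_derivative[OF Fx this]
    show "((\<lambda>t. px F (\<xi>, t)) has_real_derivative py (px F) (\<xi>, t)) (at t)" by simp
  qed (use h in simp)
  then obtain \<eta> where "y < \<eta>" "\<eta> < y + h" "px F (\<xi>, y + h) - px F (\<xi>, y) = h * py (px F) (\<xi>, \<eta>)"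
    by auto
  with \<xi> diff show ?thesis by (auto simp: power2_eq_square)
qed

text \<open>Mean value theorem first in y, then in x: the second difference equals
  h^2 f_yx at some interior point of the square.\<close>
lemma square_diff_px_py:
  assumes h: "0 < h" and sq: "\<And>s t. x \<le> s \<Longrightarrow> s \<le> x + h \<Longrightarrow> y \<le> t \<Longrightarrow> t \<le> y + h \<Longrightarrow> (s, t) \<in> U"
    and F: "has_partials_on U F" and Fy: "has_partials_on U (py F)"
  shows "\<exists>\<xi> \<eta>. x < \<xi> \<and> \<xi> < x + h \<and> y < \<eta> \<and> \<eta> < y + h
           \<and> square_diff F x y h = h\<^sup>2 * px (py F) (\<xi>, \<eta>)"
proof -
  have "\<exists>\<eta>. y < \<eta> \<and> \<eta> < y + h \<and>
      (\<lambda>t. F (x + h, t) - F (x, t)) (y + h) - (\<lambda>t. F (x + h, t) - F (x, t)) y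
      = (y + h - y) * (py F (x + h, \<eta>) - py F (x, \<eta>))"
  proof (rule MVT2)
    fix t assume "y \<le> t" "t \<le> y + h"
    with h have "(x + h, t) \<in> U" "(x, t) \<in> U" by (auto intro: sq)
    from py_has_derivative[OF F this(1)] py_has_derivative[OF F this(2)]
    show "((\<lambda>t. F (x + h, t) - F (x, t)) has_real_derivative py F (x + h, t) - py F (x, t)) (at t)"
      by (auto intro!: derivative_eq_intros)
  qed (use h in simp)
  then obtain \<eta> where \<eta>: "y < \<eta>" "\<eta> < y + h"
    and diff: "square_diff F x y h = h * (py F (x + h, \<eta>) - py F (x, \<eta>))"
    unfolding square_diff_def by (auto simp: algebra_simps)
  have "\<exists>\<xi>. x < \<xi> \<and> \<xi> < x + h \<and>
      py F (x + h, \<eta>) - py F (x, \<eta>) = (x + h - x) * px (py F) (\<xi>, \<eta>)"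
  proof (rule MVT2[where f = "\<lambda>s. py F (s, \<eta>)"])
    fix s assume "x \<le> s" "s \<le> x + h"
    with \<eta> have "(s, \<eta>) \<in> U" by (auto intro: sq)
    from px_has_derivative[OF Fy this]
    show "((\<lambda>s. py F (s, \<eta>)) has_real_derivative px (py F) (s, \<eta>)) (at s)" by simp
  qed (use h in simp)
  then obtain \<xi> where "x < \<xi>" "\<xi> < x + h" "py F (x + h, \<eta>) - py F (x, \<eta>) = h * px (py F) (\<xi>, \<eta>)"
    by auto
  with \<eta> diff show ?thesis by (auto simp: power2_eq_square)
qed

text \<open>Both mixed partials are values of the second difference divided by
  h^2 at points tending to p, and they are continuous at p.\<close>
lemma mixed_partials_symmetric:
  assumes U: "open U" and f: "C2_on U f" and p: "p \<in> U"
  shows "px (py f) p = py (px f) p"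
proof -
  obtain x y where xy: "p = (x, y)" by (cases p)
  obtain r where r: "0 < r" "ball p r \<subseteq> U" using U p openE by blast
  have F: "has_partials_on U f" and Fx: "has_partials_on U (px f)" and Fy: "has_partials_on U (py f)"
    and cont: "isCont (py (px f)) p" "isCont (px (py f)) p"
    using f U p unfolding C2_on_def C1_on_def by (auto simp: continuous_on_eq_continuous_at[OF U])
  have "\<bar>px (py f) p - py (px f) p\<bar> \<le> 0 + 2 * e" if e: "0 < e" for e
  proof -
    obtain d1 where d1: "0 < d1" "\<And>q. dist q p < d1 \<Longrightarrow> dist (py (px f) q) (py (px f) p) < e"
      using cont(1) e unfolding continuous_at_eps_delta by blast
    obtain d2 where d2: "0 < d2" "\<And>q. dist q p < d2 \<Longrightarrow> dist (px (py f) q) (px (py f) p) < e"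
      using cont(2) e unfolding continuous_at_eps_delta by blast
    define h where "h = min r (min d1 d2) / 4"
    have h: "0 < h" "2 * h < r" "2 * h < d1" "2 * h < d2"
      using r d1 d2 unfolding h_def by auto
    have near: "dist (s, t) p \<le> 2 * h" if "x \<le> s" "s \<le> x + h" "y \<le> t" "t \<le> y + h" for s t
      unfolding xy using that by (intro dist_square_le) auto
    have sq: "(s, t) \<in> U" if "x \<le> s" "s \<le> x + h" "y \<le> t" "t \<le> y + h" for s t
      using near[OF that] h r by (auto simp: dist_commute)
    obtain \<xi> \<eta> where q1: "x < \<xi>" "\<xi> < x + h" "y < \<eta>" "\<eta> < y + h"
      and D1: "square_diff f x y h = h\<^sup>2 * py (px f) (\<xi>, \<eta>)"
      using square_diff_py_px[OF h(1) sq F Fx] by blast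
    obtain \<xi>' \<eta>' where q2: "x < \<xi>'" "\<xi>' < x + h" "y < \<eta>'" "\<eta>' < y + h"
      and D2: "square_diff f x y h = h\<^sup>2 * px (py f) (\<xi>', \<eta>')"
      using square_diff_px_py[OF h(1) sq F Fy] by blast
    have "py (px f) (\<xi>, \<eta>) = px (py f) (\<xi>', \<eta>')" using D1 D2 h(1) by simp
    moreover have "\<bar>py (px f) (\<xi>, \<eta>) - py (px f) p\<bar> < e"
      using d1(2)[of "(\<xi>, \<eta>)"] near[of \<xi> \<eta>] q1 h by (simp add: dist_real_def)
    moreover have "\<bar>px (py f) (\<xi>', \<eta>') - px (py f) p\<bar> < e"
      using d2(2)[of "(\<xi>', \<eta>')"] near[of \<xi>' \<eta>'] q2 h by (simp add: dist_real_def)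
    ultimately show ?thesis by linarith
  qed
  then have "\<bar>px (py f) p - py (px f) p\<bar> \<le> 0 + e" if "0 < e" for e
    using that by (metis field_sum_of_halves half_gt_zero mult_2 add_0)
  then have "\<bar>px (py f) p - py (px f) p\<bar> \<le> 0"
    by (rule field_le_epsilon)
  then show ?thesis by simp
qed

lemma px_eqI:
  "((\<lambda>t. F (t, snd p)) has_real_derivative D) (at (fst p)) \<Longrightarrow> px F p = D"
  unfolding px_def by (rule DERIV_imp_deriv)

lemma py_eqI:
  "((\<lambda>t. F (fst p, t)) has_real_derivative D) (at (snd p)) \<Longrightarrow> py F p = D"
  unfolding py_def by (rule DERIV_imp_deriv)

lemma has_partials_onI:
  assumes "\<And>p. p \<in> U \<Longrightarrow> \<exists>Dx Dy. ((\<lambda>t. F (t, snd p)) has_real_derivative Dx) (at (fst p))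
                                  \<and> ((\<lambda>t. F (fst p, t)) has_real_derivative Dy) (at (snd p))"
  shows "has_partials_on U F"
  unfolding has_partials_on_def using assms real_differentiable_def by blast

lemma partials_quotient:
  assumes u: "has_partials_on U u" and v: "has_partials_on U v" and p: "p \<in> U" and nz: "v p \<noteq> 0"
  shows "((\<lambda>t. u (t, snd p) / v (t, snd p)) has_real_derivative
            (px u p * v p - u p * px v p) / (v p * v p)) (at (fst p))"
    and "((\<lambda>t. u (fst p, t) / v (fst p, t)) has_real_derivative
            (py u p * v p - u p * py v p) / (v p * v p)) (at (snd p))"
  using DERIV_divide[OF px_has_derivative[OF u p] px_has_derivative[OF v p]]
        DERIV_divide[OF py_has_derivative[OF u p] py_has_derivative[OF v p]] nz
  by simp_all

lemma quotient_has_partials: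
  assumes "has_partials_on U u" "has_partials_on U v" "\<forall>p\<in>U. v p \<noteq> 0"
  shows "has_partials_on U (\<lambda>q. u q / v q)"
  using partials_quotient[OF assms(1,2)] assms(3) by (intro has_partials_onI) blast

text \<open>The algebra behind the Burgers relations: under (R), the quotient-rule
  expression for one partial of a/b is a/b times the one for the other.\<close>
lemma quotient_rule_relation:
  fixes a b ax ay bx "by" :: real
  assumes "b \<noteq> 0" and "b * (b * ay - a * by) = a * (b * ax - a * bx)"
  shows "(ay * b - a * by) / (b * b) = a / b * ((ax * b - a * bx) / (b * b))"
proof -
  have "(ay * b - a * by) / (b * b) - a / b * ((ax * b - a * bx) / (b * b))
      = (b * (b * ay - a * by) - a * (b * ax - a * bx)) / (b * b * b)"
    using assms(1) by (simp add: field_simps)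
  with assms(2) show ?thesis by simp
qed

lemma quotient_burgers_y:
  assumes u: "has_partials_on U u" and v: "has_partials_on U v" and p: "p \<in> U" and nz: "v p \<noteq> 0"
    and rel: "v p * (v p * py u p - u p * py v p) = u p * (v p * px u p - u p * px v p)"
  shows "py (\<lambda>q. u q / v q) p = u p / v p * px (\<lambda>q. u q / v q) p"
proof -
  have "py (\<lambda>q. u q / v q) p = (py u p * v p - u p * py v p) / (v p * v p)"
    "px (\<lambda>q. u q / v q) p = (px u p * v p - u p * px v p) / (v p * v p)"
    using partials_quotient[OF u v p nz] by (auto intro: px_eqI py_eqI)
  moreover have "(py u p * v p - u p * py v p) / (v p * v p)
      = u p / v p * ((px u p * v p - u p * px v p) / (v p * v p))"
    using quotient_rule_relation[OF nz rel] .
  ultimately show ?thesis by simp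
qed

lemma quotient_burgers_x:
  assumes u: "has_partials_on U u" and v: "has_partials_on U v" and p: "p \<in> U" and nz: "v p \<noteq> 0"
    and rel: "v p * (v p * px u p - u p * px v p) = u p * (v p * py u p - u p * py v p)"
  shows "px (\<lambda>q. u q / v q) p = u p / v p * py (\<lambda>q. u q / v q) p"
proof -
  have "px (\<lambda>q. u q / v q) p = (px u p * v p - u p * px v p) / (v p * v p)"
    "py (\<lambda>q. u q / v q) p = (py u p * v p - u p * py v p) / (v p * v p)"
    using partials_quotient[OF u v p nz] by (auto intro: px_eqI py_eqI)
  moreover have "(px u p * v p - u p * px v p) / (v p * v p)
      = u p / v p * ((py u p * v p - u p * py v p) / (v p * v p))"
    using quotient_rule_relation[OF nz rel] .
  ultimately show ?thesis by simp
qed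

text \<open>Partials of the functions y + c F and x - c F, instantiated below with
  F = f_x resp. F = f_y and c = 2 to obtain u and v.\<close>
lemma affine_shift_partials:
  assumes F: "has_partials_on U F"
  shows "has_partials_on U (\<lambda>q. snd q + c * F q)" "has_partials_on U (\<lambda>q. fst q - c * F q)"
    and "p \<in> U \<Longrightarrow> px (\<lambda>q. snd q + c * F q) p = c * px F p"
    and "p \<in> U \<Longrightarrow> py (\<lambda>q. snd q + c * F q) p = 1 + c * py F p"
    and "p \<in> U \<Longrightarrow> px (\<lambda>q. fst q - c * F q) p = 1 - c * px F p"
    and "p \<in> U \<Longrightarrow> py (\<lambda>q. fst q - c * F q) p = - (c * py F p)"
proof -
  have d: "((\<lambda>t. snd q + c * F (t, snd q)) has_real_derivative c * px F q) (at (fst q))"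
    "((\<lambda>t. t + c * F (fst q, t)) has_real_derivative 1 + c * py F q) (at (snd q))"
    "((\<lambda>t. t - c * F (t, snd q)) has_real_derivative 1 - c * px F q) (at (fst q))"
    "((\<lambda>t. fst q - c * F (fst q, t)) has_real_derivative - (c * py F q)) (at (snd q))"
    if "q \<in> U" for q
    using px_has_derivative[OF F that] py_has_derivative[OF F that]
    by (auto intro!: derivative_eq_intros)
  show "has_partials_on U (\<lambda>q. snd q + c * F q)" "has_partials_on U (\<lambda>q. fst q - c * F q)"
    by (rule has_partials_onI, use d in force)+
  show "p \<in> U \<Longrightarrow> px (\<lambda>q. snd q + c * F q) p = c * px F p"
    "p \<in> U \<Longrightarrow> py (\<lambda>q. snd q + c * F q) p = 1 + c * py F p"
    "p \<in> U \<Longrightarrow> px (\<lambda>q. fst q - c * F q) p = 1 - c * px F p"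
    "p \<in> U \<Longrightarrow> py (\<lambda>q. fst q - c * F q) p = - (c * py F p)"
    by (rule px_eqI py_eqI, use d in simp)+
qed

text \<open>Equation (*) at p, rewritten in terms of u and v, is the relation (R)
  at p; this uses the symmetry of the mixed partials of f.\<close>
lemma transversality_relation:
  fixes f :: "real \<times> real \<Rightarrow> real"
  defines "u \<equiv> \<lambda>q. snd q + 2 * px f q" and "v \<equiv> \<lambda>q. fst q - 2 * py f q"
  assumes U: "open U" and f: "C2_on U f" and p: "p \<in> U"
    and eq: "2 * v p * u p * (py (py f) p - px (px f) p)
        + (1 - 2 * py (px f) p) * (u p)\<^sup>2 + (v p)\<^sup>2 * (1 + 2 * py (px f) p) = 0"
  shows "v p * (v p * py u p - u p * py v p) = u p * (v p * px u p - u p * px v p)"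
proof -
  have Fx: "has_partials_on U (px f)" and Fy: "has_partials_on U (py f)"
    using f unfolding C2_on_def C1_on_def by auto
  have partials: "px u p = 2 * px (px f) p" "py u p = 1 + 2 * py (px f) p"
    "px v p = 1 - 2 * py (px f) p" "py v p = - (2 * py (py f) p)"
    unfolding u_def v_def using affine_shift_partials[OF Fx, where c = 2] affine_shift_partials[OF Fy, where c = 2]
      mixed_partials_symmetric[OF U f p] p by simp_all
  show ?thesis unfolding partials using eq by (simp add: algebra_simps power2_eq_square)
qed

theorem mainTheorem9:
  fixes U :: "(real \<times> real) set" and f :: "real \<times> real \<Rightarrow> real"
  assumes "open U" and "C2_on U f"
    and eq: "\<forall>p\<in>U. (let x = fst p; y = snd p in
        2 * (x - 2 * py f p) * (y + 2 * px f p) * (py (py f) p - px (px f) p)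
        + (1 - 2 * py (px f) p) * (y + 2 * px f p)^2
        + (x - 2 * py f p)^2 * (1 + 2 * py (px f) p) = 0)"
  shows "((\<forall>p\<in>U. fst p - 2 * py f p \<noteq> 0) \<longrightarrow>
           (let g = (\<lambda>p. (snd p + 2 * px f p) / (fst p - 2 * py f p)) in
              has_partials_on U g \<and> (\<forall>p\<in>U. py g p = g p * px g p)))
       \<and> ((\<forall>p\<in>U. snd p + 2 * px f p \<noteq> 0) \<longrightarrow>
           (let h = (\<lambda>p. (fst p - 2 * py f p) / (snd p + 2 * px f p)) in
              has_partials_on U h \<and> (\<forall>p\<in>U. px h p = h p * py h p)))"
proof -
  define u where "u = (\<lambda>q. snd q + 2 * px f q)"
  define v where "v = (\<lambda>q. fst q - 2 * py f q)"
  have "has_partials_on U (px f)" "has_partials_on U (py f)"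
    using assms(2) unfolding C2_on_def C1_on_def by auto
  then have u: "has_partials_on U u" and v: "has_partials_on U v"
    unfolding u_def v_def by (auto intro: affine_shift_partials)
  have rel: "v p * (v p * py u p - u p * py v p) = u p * (v p * px u p - u p * px v p)"
    and rel': "u p * (u p * px v p - v p * px u p) = v p * (u p * py v p - v p * py u p)"
    if p: "p \<in> U" for p
  proof -
    show rel: "v p * (v p * py u p - u p * py v p) = u p * (v p * px u p - u p * px v p)"
      using transversality_relation[OF assms(1,2) p] eq p unfolding u_def v_def by (simp add: Let_def)
    then show "u p * (u p * px v p - v p * px u p) = v p * (u p * py v p - v p * py u p)"
      by (simp add: algebra_simps)
  qed
  show ?thesis
    using quotient_has_partials[OF u v] quotient_burgers_y[OF u v _ _ rel]
      quotient_has_partials[OF v u] quotient_burgers_x[OF v u _ _ rel']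
    unfolding u_def v_def Let_def by blast
qed

end
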